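(* As $q$-series with coefficients reduced modulo $2$, $$\sum_{n\ge0}\mathcal{F}^*_6(4n)q^n\equiv\frac{(q;q)_\infty^3}{(q^3;q^3)_\infty^3}\pmod 2\qquad\text{and}\qquad \sum_{n\ge0}\mathcal{F}^*_6(8n+2)q^n\equiv (q;q)_\infty^3\pmod 2.$$
   Context: Let $(a;q)_\infty=\prod_{j\ge0}(1-aq^j)$. Define the integers $\mathcal{F}^*_6(n)$ by $$\sum_{n\ge0}\mathcal{F}^*_6(n)q^n=\left(\frac{(q;q)_\infty(q^3;q^3)_\infty}{(q^2;q^2)_\infty(q^6;q^6)_\infty}\right)^6.$$ *)

theory Defs
  imports "HOL-Computational_Algebra.Formal_Power_Series" "HOL-Number_Theory.Cong"
begin

text \<open>(q^k;q^k)_infinity as an integer formal power series: its n-th coefficient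
  agrees with that of the finite product over j = 1..n of (1 - q^(k j)), since
  the remaining factors (k j > n, for k >= 1) do not affect coefficient n.\<close>
definition qpoch :: "nat \<Rightarrow> int fps" where
  "qpoch k = Abs_fps (\<lambda>n. fps_nth (\<Prod>j\<in>{1..n}. (1 - fps_X ^ (k * j))) n)"

definition finv :: "int fps \<Rightarrow> int fps" where
  "finv g = fps_right_inverse g 1"

definition Fstar6_series :: "int fps" where
  "Fstar6_series = (qpoch 1 * qpoch 3 * finv (qpoch 2 * qpoch 6)) ^ 6"

definition Fstar6 :: "nat \<Rightarrow> int" where
  "Fstar6 n = fps_nth Fstar6_series n"

end

theory Submission
  imports Defs "HOL-Library.Z2" "HOL-Library.Disjoint_Sets"
begin

text \<open>
  Modulo 2 squaring is the Frobenius map \<open>f(q) \<mapsto> f(q\<^sup>2)\<close>, so the generating function of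
  \<open>\<F>\<^sup>*\<^sub>6\<close> reduces to \<open>1/W(q\<^sup>2)\<close> with \<open>W = (q;q)\<^sup>3 (q\<^sup>3;q\<^sup>3)\<^sup>3\<close>.
  A finite, telescoping form of Euler's pentagonal theorem shows that \<open>(q;q)\<close> is congruent to the
  sum of those \<open>q\<^sup>i\<close> with \<open>3i\<close> a triangular number.  For \<open>\<psi>(q) = \<Sum>\<^sub>j q\<^bsup>j(j+1)/2\<^esup>\<close>, an
  involution on the positive odd solutions of \<open>x\<^sup>2 + 3y\<^sup>2 = 8m + 4\<close> gives
  \<open>\<psi>(q)\<psi>(q\<^sup>3) \<equiv> \<psi>(q\<^sup>4) + q\<psi>(q\<^sup>1\<^sup>2)\<close>; its 3-section is \<open>\<psi>(q)(q;q) \<equiv> (q\<^sup>4;q\<^sup>4) \<equiv> (q;q)\<^sup>4\<close>, i.e.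
  Jacobi's \<open>\<psi>(q) \<equiv> (q;q)\<^sup>3\<close>.  Hence \<open>W \<equiv> \<psi>(q)\<psi>(q\<^sup>3)\<close> has an explicit 2-dissection, and so
  has \<open>1/W = W \<cdot> (1/W)(q\<^sup>2)\<close>; reading off its even and odd parts gives both congruences.
\<close>

unbundle fps_syntax

section \<open>Reduction modulo 2\<close>

lemma bit_of_int: "(of_int k :: bit) = (if even k then 0 else 1)"
proof -
  have "(of_int k :: bit) = of_int (k div 2) * 2 + of_int (k mod 2)"
    by (metis div_mult_mod_eq of_int_add of_int_mult of_int_numeral)
  then have "(of_int k :: bit) = of_int (k mod 2)" by simp
  then show ?thesis
    by (cases "even k") (auto simp: even_iff_mod_2_eq_zero odd_iff_mod_2_eq_one)
qed

lemma cong_2_iff_bit: "[x = y] (mod 2) \<longleftrightarrow> (of_int x :: bit) = of_int y"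
  unfolding cong_def bit_of_int
  by (auto simp: even_iff_mod_2_eq_zero odd_iff_mod_2_eq_one)

definition fps_mod2 :: "int fps \<Rightarrow> bit fps" where
  "fps_mod2 f = Abs_fps (\<lambda>n. of_int (f $ n))"

lemma fps_mod2_nth [simp]: "fps_mod2 f $ n = of_int (f $ n)"
  by (simp add: fps_mod2_def)

lemma fps_mod2_mult: "fps_mod2 (f * g) = fps_mod2 f * fps_mod2 g"
  by (rule fps_ext) (simp add: fps_mult_nth)

lemma fps_mod2_diff: "fps_mod2 (f - g) = fps_mod2 f - fps_mod2 g"
  by (rule fps_ext) simp

lemma fps_mod2_one [simp]: "fps_mod2 1 = 1"
  by (rule fps_ext) simp

lemma fps_mod2_X [simp]: "fps_mod2 fps_X = fps_X"
  by (rule fps_ext) (simp add: fps_X_def)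

lemma fps_mod2_power: "fps_mod2 (f ^ n) = fps_mod2 f ^ n"
  by (induction n) (simp_all add: fps_mod2_mult)

lemma fps_mod2_prod: "fps_mod2 (prod F S) = (\<Prod>i\<in>S. fps_mod2 (F i))"
  by (induction S rule: infinite_finite_induct) (simp_all add: fps_mod2_mult)

lemma fps_mod2_finv:
  assumes "g $ 0 = 1"
  shows "fps_mod2 (finv g) = inverse (fps_mod2 g)"
proof -
  have "g * finv g = 1" unfolding finv_def using assms by (simp add: fps_right_inverse)
  then have "fps_mod2 g * fps_mod2 (finv g) = 1" by (metis fps_mod2_mult fps_mod2_one)
  then show ?thesis by (rule fps_inverse_unique[symmetric])
qed

lemma fps_bit_add_self [simp]: "(f :: bit fps) + f = 0"
  by (rule fps_ext) (simp only: fps_add_nth add_bit_eq_xor xor_self_eq fps_zero_nth)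

lemma fps_bit_minus_eq_plus: "(f :: bit fps) - g = f + g"
  by (rule fps_ext) simp

lemma sum_bit_eq_sum_fixed_points:
  fixes g :: "'a \<Rightarrow> bit"
  assumes "finite S" "\<And>x. x \<in> S \<Longrightarrow> \<sigma> x \<in> S" "\<And>x. x \<in> S \<Longrightarrow> \<sigma> (\<sigma> x) = x"
    and "\<And>x. x \<in> S \<Longrightarrow> g (\<sigma> x) = g x"
  shows "sum g S = sum g {x\<in>S. \<sigma> x = x}"
proof -
  have "sum g {x\<in>S. \<sigma> x \<noteq> x} = 0"
    by (rule sum_involution_eq_0[where h = \<sigma>]) (use assms in auto)
  moreover have "sum g S = sum g {x\<in>S. \<sigma> x = x} + sum g {x\<in>S. \<sigma> x \<noteq> x}"
    using assms(1) by (subst sum.union_disjoint[symmetric]) (auto intro: sum.cong)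
  ultimately show ?thesis by simp
qed

section \<open>Dilation \<open>f(q) \<mapsto> f(q\<^sup>k)\<close> and the Frobenius map\<close>

definition fps_dilate :: "nat \<Rightarrow> 'a::zero fps \<Rightarrow> 'a fps" where
  "fps_dilate k f = Abs_fps (\<lambda>n. if k dvd n then f $ (n div k) else 0)"

lemma fps_dilate_nth: "fps_dilate k f $ n = (if k dvd n then f $ (n div k) else 0)"
  by (simp add: fps_dilate_def)

lemma fps_dilate_nth_0 [simp]: "fps_dilate k f $ 0 = f $ 0"
  by (simp add: fps_dilate_nth)

lemma fps_dilate_nth_mult [simp]: "0 < k \<Longrightarrow> fps_dilate k f $ (k * n) = f $ n"
  by (simp add: fps_dilate_def)

lemma fps_dilate_1 [simp]: "fps_dilate 1 f = f"
  by (rule fps_ext) (simp add: fps_dilate_nth)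

lemma sum_multiples_reindex:
  fixes F :: "nat \<Rightarrow> 'a::comm_monoid_add"
  assumes "0 < k"
  shows "(\<Sum>i=0..k*m. if k dvd i then F i else 0) = (\<Sum>i=0..m. F (k*i))"
proof -
  have "(\<Sum>i=0..k*m. if k dvd i then F i else 0) = (\<Sum>i\<in>{i\<in>{0..k*m}. k dvd i}. F i)"
    by (rule sum.inter_filter[symmetric]) simp
  also have "{i\<in>{0..k*m}. k dvd i} = (\<lambda>i. k*i) ` {0..m}"
    using assms by (auto simp: image_iff dvd_def)
  also have "(\<Sum>i\<in>(\<lambda>i. k*i) ` {0..m}. F i) = (\<Sum>i=0..m. F (k*i))"
    using assms by (subst sum.reindex) (auto simp: inj_on_def)
  finally show ?thesis .
qed

lemma fps_dilate_mult:
  fixes f g :: "'a::comm_ring_1 fps"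
  assumes "0 < k"
  shows "fps_dilate k (f * g) = fps_dilate k f * fps_dilate k g"
proof (rule fps_ext)
  fix n
  show "fps_dilate k (f * g) $ n = (fps_dilate k f * fps_dilate k g) $ n"
  proof (cases "k dvd n")
    case False
    have "(fps_dilate k f * fps_dilate k g) $ n
        = (\<Sum>i=0..n. fps_dilate k f $ i * fps_dilate k g $ (n - i))"
      by (simp add: fps_mult_nth)
    also have "\<dots> = 0"
    proof (rule sum.neutral, clarify)
      fix i assume "i \<in> {0..n}"
      then have "\<not> (k dvd i \<and> k dvd (n - i))" using False
        by (metis atLeastAtMost_iff dvd_add le_add_diff_inverse)
      then show "fps_dilate k f $ i * fps_dilate k g $ (n - i) = 0" by (auto simp: fps_dilate_nth)
    qed
    finally show ?thesis using False by (simp add: fps_dilate_nth)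
  next
    case True
    then obtain m where m: "n = k * m" by (auto simp: dvd_def)
    have "(fps_dilate k f * fps_dilate k g) $ n
        = (\<Sum>i=0..k*m. fps_dilate k f $ i * fps_dilate k g $ (k*m - i))"
      by (simp add: fps_mult_nth m)
    also have "\<dots> = (\<Sum>i=0..k*m. if k dvd i then f $ (i div k) * g $ ((k*m - i) div k) else 0)"
      by (rule sum.cong[OF refl]) (auto simp: fps_dilate_nth dvd_diff_nat)
    also have "\<dots> = (\<Sum>i=0..m. f $ i * g $ ((k*m - k*i) div k))"
      using sum_multiples_reindex[OF assms, of "\<lambda>i. f $ (i div k) * g $ ((k*m - i) div k)" m]
        assms by simp
    also have "\<dots> = (f * g) $ m"
      using assms by (simp add: right_diff_distrib'[symmetric] fps_mult_nth)
    finally show ?thesis using m assms by simp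
  qed
qed

lemma fps_dilate_one [simp]: "0 < k \<Longrightarrow> fps_dilate k (1::'a::comm_ring_1 fps) = 1"
  by (rule fps_ext) (auto simp: fps_dilate_nth)

lemma fps_dilate_add: "fps_dilate k (f + g :: 'a::monoid_add fps) = fps_dilate k f + fps_dilate k g"
  by (rule fps_ext) (auto simp: fps_dilate_nth)

lemma fps_dilate_power:
  "0 < k \<Longrightarrow> fps_dilate k ((f::'a::comm_ring_1 fps) ^ n) = fps_dilate k f ^ n"
  by (induction n) (simp_all add: fps_dilate_mult)

lemma fps_dilate_prod:
  "0 < k \<Longrightarrow> fps_dilate k (prod F S) = (\<Prod>i\<in>S. fps_dilate k (F i :: 'a::comm_ring_1 fps))"
  by (induction S rule: infinite_finite_induct) (simp_all add: fps_dilate_mult)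

lemma fps_dilate_X_power:
  "0 < k \<Longrightarrow> fps_dilate k (fps_X ^ j :: 'a::comm_ring_1 fps) = fps_X ^ (k * j)"
  by (rule fps_ext) (auto simp: fps_dilate_nth)

lemma fps_dilate_dilate:
  assumes "0 < k" "0 < l"
  shows "fps_dilate k (fps_dilate l f) = fps_dilate (k * l) f"
proof (rule fps_ext)
  fix n
  show "fps_dilate k (fps_dilate l f) $ n = fps_dilate (k * l) f $ n"
  proof (cases "k dvd n")
    case True
    then obtain m where "n = k * m" by (auto simp: dvd_def)
    then show ?thesis using assms by (simp add: fps_dilate_nth div_mult2_eq)
  next
    case False
    then have "\<not> k * l dvd n" using dvd_mult_left by blast
    then show ?thesis using False by (simp add: fps_dilate_nth)
  qed
qed

text \<open>In \<open>(f\<^sup>2)\<^sub>n = \<Sum>\<^sub>i f\<^sub>i f\<^sub>n\<^sub>-\<^sub>i\<close> the terms \<open>i\<close> and \<open>n - i\<close> cancel in pairs, leaving only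
  \<open>i = n/2\<close>.\<close>
lemma fps_bit_square: "(f :: bit fps) ^ 2 = fps_dilate 2 f"
proof (rule fps_ext)
  fix n
  have "(f ^ 2) $ n = (\<Sum>i=0..n. f $ i * f $ (n - i))"
    by (simp add: power2_eq_square fps_mult_nth)
  also have "\<dots> = (\<Sum>i\<in>{i\<in>{0..n}. n - i = i}. f $ i * f $ (n - i))"
    by (rule sum_bit_eq_sum_fixed_points) (auto simp: mult.commute)
  also have "\<dots> = fps_dilate 2 f $ n"
  proof (cases "even n")
    case True
    then have "{i\<in>{0..n}. n - i = i} = {n div 2}" by auto
    moreover have "n - n div 2 = n div 2" using True by auto
    ultimately show ?thesis using True by (simp del: mult_bit_eq_and add: fps_dilate_nth)
  next
    case False
    have "n \<noteq> 2 * i" for i using False by auto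
    then have none: "{i\<in>{0..n}. n - i = i} = {}" by (auto simp: mult_2) (metis le_add_diff_inverse)
    show ?thesis unfolding none using False by (simp add: fps_dilate_nth)
  qed
  finally show "(f ^ 2) $ n = fps_dilate 2 f $ n" .
qed

lemma two_dissection_nth_even:
  "(fps_dilate 2 F + fps_X * fps_dilate 2 G) $ (2*n) = (F $ n :: 'a::comm_ring_1)"
  by (cases n) (simp_all add: fps_X_mult_nth fps_dilate_nth)

lemma two_dissection_nth_odd:
  "(fps_dilate 2 F + fps_X * fps_dilate 2 G) $ (2*n+1) = (G $ n :: 'a::comm_ring_1)"
  by (simp add: fps_X_mult_nth fps_dilate_nth)

section \<open>Euler's product modulo 2\<close>

fun triangle :: "nat \<Rightarrow> nat" where
  "triangle 0 = 0"
| "triangle (Suc k) = triangle k + Suc k"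

lemma two_triangle: "2 * triangle k = k * (k + 1)"
  by (induction k) (simp_all add: algebra_simps)

lemma strict_mono_triangle: "strict_mono triangle"
  by (simp add: strict_mono_Suc_iff)

lemma triangle_inj: "triangle j = triangle k \<Longrightarrow> j = k"
  using strict_mono_eq[OF strict_mono_triangle] by blast

lemma le_triangle: "k \<le> triangle k"
  by (induction k) auto

definition plus_prod :: "nat \<Rightarrow> nat \<Rightarrow> bit fps" where
  "plus_prod a b = (\<Prod>j\<in>{a..b}. 1 + fps_X ^ j)"

text \<open>A finite form of Euler's pentagonal theorem in characteristic 2: \<open>plus_prod 1 n\<close> and
  \<open>euler_partial n\<close> agree up to degree \<open>n\<close>, and the latter telescopes to a sum of distinct monomials.\<close>
definition euler_partial :: "nat \<Rightarrow> bit fps" where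
  "euler_partial n = (\<Sum>k\<in>{0..n}. fps_X ^ (triangle k + n * k) * plus_prod (Suc k) n)"

lemma plus_prod_split_left: "k \<le> n \<Longrightarrow> plus_prod k n = (1 + fps_X ^ k) * plus_prod (Suc k) n"
  unfolding plus_prod_def by (simp add: prod.atLeast_Suc_atMost)

lemma plus_prod_split_right:
  "k \<le> Suc n \<Longrightarrow> plus_prod k (Suc n) = plus_prod k n * (1 + fps_X ^ Suc n)"
  unfolding plus_prod_def by (simp add: prod.nat_ivl_Suc')

lemma plus_prod_empty: "n < k \<Longrightarrow> plus_prod k n = 1"
  unfolding plus_prod_def by simp

lemma plus_prod_0: "plus_prod 0 n = 0"
proof -
  have "\<exists>j\<in>{0..n}. (1 :: bit fps) + fps_X ^ j = 0" by (rule bexI[of _ 0]) simp_all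
  then show ?thesis unfolding plus_prod_def by (rule prod_zero[rotated]) simp
qed

lemma euler_partial_term_Suc:
  assumes "k \<le> n"
  shows "fps_X ^ (triangle k + Suc n * k) * plus_prod (Suc k) (Suc n)
     = fps_X ^ (triangle k + n * k) * plus_prod (Suc k) n
       + (fps_X ^ (triangle k + n * k) * plus_prod k n
          + fps_X ^ (triangle (Suc k) + n * Suc k) * plus_prod (Suc k) n)"
proof -
  define u where "u = (fps_X ^ (triangle k + n * k) :: bit fps)"
  define R where "R = plus_prod (Suc k) n"
  have "plus_prod (Suc k) (Suc n) = R * (1 + fps_X ^ Suc n)"
    using assms by (simp add: plus_prod_split_right R_def)
  moreover have "plus_prod k n = (1 + fps_X ^ k) * R"
    using assms by (simp add: plus_prod_split_left R_def)
  moreover have "(fps_X ^ (triangle k + Suc n * k) :: bit fps) = u * fps_X ^ k"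
    by (simp add: u_def power_add[symmetric] algebra_simps)
  moreover have "(fps_X ^ (triangle (Suc k) + n * Suc k) :: bit fps) = u * fps_X ^ (k + Suc n)"
    by (simp add: u_def power_add[symmetric] algebra_simps)
  moreover have "u * fps_X ^ k * (R * (1 + fps_X ^ Suc n))
      = u * R + (u * ((1 + fps_X ^ k) * R) + u * fps_X ^ (k + Suc n) * R)"
  proof -
    have "u * ((1 + fps_X ^ k) * R) = u * R + u * fps_X ^ k * R"
      by (simp add: algebra_simps)
    then have "u * R + (u * ((1 + fps_X ^ k) * R) + u * fps_X ^ (k + Suc n) * R)
        = u * fps_X ^ k * R + u * fps_X ^ (k + Suc n) * R"
      by (simp add: add.assoc[symmetric])
    also have "\<dots> = u * fps_X ^ k * (R * (1 + fps_X ^ Suc n))"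
      by (simp add: algebra_simps power_add)
    finally show ?thesis by simp
  qed
  ultimately show ?thesis by (simp add: u_def R_def)
qed

lemma euler_partial_Suc:
  "euler_partial (Suc n) = euler_partial n + fps_X ^ (triangle (Suc n) + n * Suc n)
     + fps_X ^ (triangle (Suc n) + Suc n * Suc n)"
proof -
  define C where "C k = (fps_X ^ (triangle k + n * k) * plus_prod k n :: bit fps)" for k
  have "euler_partial (Suc n)
      = (\<Sum>k<Suc n. fps_X ^ (triangle k + Suc n * k) * plus_prod (Suc k) (Suc n))
        + fps_X ^ (triangle (Suc n) + Suc n * Suc n) * plus_prod (Suc (Suc n)) (Suc n)"
    unfolding euler_partial_def by (simp add: atLeast0AtMost lessThan_Suc_atMost[symmetric])
  also have "(\<Sum>k<Suc n. fps_X ^ (triangle k + Suc n * k) * plus_prod (Suc k) (Suc n))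
      = (\<Sum>k<Suc n. fps_X ^ (triangle k + n * k) * plus_prod (Suc k) n + (C k + C (Suc k)))"
    unfolding C_def by (rule sum.cong[OF refl], rule euler_partial_term_Suc) simp
  also have "\<dots> = euler_partial n + (\<Sum>k<Suc n. C (Suc k) - C k)"
    unfolding euler_partial_def fps_bit_minus_eq_plus sum.distrib
    by (simp add: atLeast0AtMost lessThan_Suc_atMost add.commute)
  also have "(\<Sum>k<Suc n. C (Suc k) - C k) = C (Suc n) - C 0"
    by (rule sum_lessThan_telescope)
  also have "C 0 = 0" by (simp add: C_def plus_prod_0)
  also have "C (Suc n) = fps_X ^ (triangle (Suc n) + n * Suc n)" by (simp add: C_def plus_prod_empty)
  finally show ?thesis by (simp add: plus_prod_empty)
qed

lemma triangle_3n_plus_2: "triangle (3*n+2) = 3 * (triangle (Suc n) + n * Suc n)"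
proof -
  have "2 * triangle (3*n+2) = 2 * (3 * (triangle (Suc n) + n * Suc n))"
    using two_triangle[of "3*n+2"] two_triangle[of "Suc n"]
    by (simp add: algebra_simps del: triangle.simps)
  then show ?thesis by simp
qed

lemma euler_partial_nth:
  "euler_partial n $ i = (if \<exists>j \<le> 3*n. triangle j = 3*i then 1 else 0)"
proof (induction n arbitrary: i)
  case 0
  show ?case by (simp add: euler_partial_def plus_prod_def)
next
  case (Suc n)
  define e1 where "e1 = triangle (Suc n) + n * Suc n"
  define e2 where "e2 = triangle (Suc n) + Suc n * Suc n"
  have t2: "triangle (3*n+2) = 3*e1" unfolding e1_def by (rule triangle_3n_plus_2)
  have t3: "triangle (3*n+3) = 3*e2" and t1: "triangle (3*n+1) + (3*n+2) = 3*e1"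
    using t2 by (simp_all add: e1_def e2_def numeral_3_eq_3)
  have e12: "e2 = e1 + Suc n" unfolding e1_def e2_def by simp
  have "euler_partial (Suc n) $ i
      = euler_partial n $ i + (if i = e1 then 1 else 0) + (if i = e2 then 1 else 0)"
    unfolding e1_def e2_def euler_partial_Suc by (simp only: fps_add_nth fps_X_power_nth)
  also have "\<dots> = (if \<exists>j \<le> 3*Suc n. triangle j = 3*i then 1 else 0)"
  proof (cases "\<exists>j \<le> 3*n. triangle j = 3*i")
    case True
    then obtain j where j: "j \<le> 3*n" "triangle j = 3*i" by auto
    have "triangle j < triangle (3*n+2)"
      using j(1) by (intro strict_monoD[OF strict_mono_triangle]) simp
    then have "i \<noteq> e1" "i \<noteq> e2" using j t2 e12 by auto
    moreover have "\<exists>j \<le> 3*Suc n. triangle j = 3*i" using j by (intro exI[of _ j]) simp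
    ultimately show ?thesis using True Suc.IH by simp
  next
    case False
    then have "(\<exists>j \<le> 3*Suc n. triangle j = 3*i)
        \<longleftrightarrow> triangle (3*n+1) = 3*i \<or> triangle (3*n+2) = 3*i \<or> triangle (3*n+3) = 3*i"
      by (auto simp: le_Suc_eq numeral_3_eq_3 simp del: triangle.simps)
    also have "\<dots> \<longleftrightarrow> i = e1 \<or> i = e2"
      using t1 t2 t3 by presburger
    finally have "(\<exists>j \<le> 3*Suc n. triangle j = 3*i) \<longleftrightarrow> i = e1 \<or> i = e2" .
    moreover have "euler_partial n $ i = 0" using Suc.IH False by simp
    ultimately show ?thesis using e12 by auto
  qed
  finally show ?case .
qed

lemma plus_prod_nth:
  assumes "i \<le> n"
  shows "plus_prod 1 n $ i = (if \<exists>j. triangle j = 3*i then 1 else 0)"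
proof -
  have high: "(fps_X ^ (triangle k + n * k) * plus_prod (Suc k) n) $ i = 0" if "k \<in> {1..n}" for k
  proof -
    have "1 \<le> triangle k" "n \<le> n * k" using that le_triangle[of k] by simp_all
    then have "i < triangle k + n * k" using assms by linarith
    then show ?thesis by (simp add: fps_X_power_mult_nth)
  qed
  have "euler_partial n $ i = (\<Sum>k\<in>{0..n}. (fps_X ^ (triangle k + n * k) * plus_prod (Suc k) n) $ i)"
    unfolding euler_partial_def by (simp add: fps_sum_nth)
  also have "\<dots> = plus_prod 1 n $ i"
    using high by (simp add: sum.atLeast_Suc_atMost)
  finally have "plus_prod 1 n $ i = euler_partial n $ i" ..
  moreover have "(\<exists>j \<le> 3*n. triangle j = 3*i) \<longleftrightarrow> (\<exists>j. triangle j = 3*i)"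
    using assms le_triangle by (metis le_trans mult_le_mono2)
  ultimately show ?thesis by (simp add: euler_partial_nth)
qed

definition euler_bit :: "bit fps" where
  "euler_bit = Abs_fps (\<lambda>i. if \<exists>j. triangle j = 3*i then 1 else 0)"

lemma euler_bit_0: "euler_bit $ 0 = 1"
  by (auto simp: euler_bit_def intro: exI[of _ 0])

lemma fps_mod2_qpoch: "0 < k \<Longrightarrow> fps_mod2 (qpoch k) = fps_dilate k euler_bit"
proof (rule fps_ext)
  fix n assume k: "0 < k"
  have "fps_mod2 (qpoch k) $ n = fps_mod2 (\<Prod>j\<in>{1..n}. 1 - fps_X ^ (k*j)) $ n"
    by (simp add: qpoch_def)
  also have "fps_mod2 (\<Prod>j\<in>{1..n}. 1 - fps_X ^ (k*j)) = (\<Prod>j\<in>{1..n}. 1 + fps_X ^ (k*j))"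
    by (simp add: fps_mod2_prod fps_mod2_diff fps_mod2_power fps_bit_minus_eq_plus)
  also have "\<dots> = fps_dilate k (plus_prod 1 n)"
    unfolding plus_prod_def using k by (simp add: fps_dilate_prod fps_dilate_add fps_dilate_X_power)
  also have "fps_dilate k (plus_prod 1 n) $ n = fps_dilate k euler_bit $ n"
    using plus_prod_nth[of "n div k" n] by (simp add: fps_dilate_nth euler_bit_def)
  finally show "fps_mod2 (qpoch k) $ n = fps_dilate k euler_bit $ n" .
qed

lemma fps_mod2_qpoch_1: "fps_mod2 (qpoch 1) = euler_bit"
  using fps_mod2_qpoch[of 1] fps_dilate_1 by (simp only: zero_less_one)

section \<open>Ramanujan's \<open>\<psi>\<close> modulo 2\<close>

definition psi_bit :: "bit fps" where
  "psi_bit = Abs_fps (\<lambda>i. if \<exists>j. triangle j = i then 1 else 0)"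

lemma psi_bit_0: "psi_bit $ 0 = 1"
  by (auto simp: psi_bit_def intro: exI[of _ 0])

lemma euler_bit_nth: "euler_bit $ n = psi_bit $ (3 * n)"
  by (simp add: euler_bit_def psi_bit_def)

text \<open>Multiplication of \<open>x + y\<surd>-3\<close> by the unit \<open>(1 + \<surd>-3)/2\<close> or \<open>(1 - \<surd>-3)/2\<close> of
  \<open>\<int>[\<omega>]\<close>, up to sign; the choice according to \<open>x - y mod 4\<close> keeps both coordinates odd.\<close>
definition norm3_involution :: "int \<times> int \<Rightarrow> int \<times> int" where
  "norm3_involution p = (case p of (x, y) \<Rightarrow>
     if 4 dvd (x - y) then (\<bar>x - 3*y\<bar> div 2, (x + y) div 2)
     else ((x + 3*y) div 2, \<bar>x - y\<bar> div 2))"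

lemma norm3_involution_cong:
  "4 dvd (x - y) \<Longrightarrow> x - 3*y = 2*u \<Longrightarrow> x + y = 2*v \<Longrightarrow> norm3_involution (x, y) = (\<bar>u\<bar>, v)"
  unfolding norm3_involution_def by (simp add: abs_mult)

lemma norm3_involution_not_cong:
  "\<not> 4 dvd (x - y) \<Longrightarrow> x + 3*y = 2*u \<Longrightarrow> x - y = 2*v \<Longrightarrow> norm3_involution (x, y) = (u, \<bar>v\<bar>)"
  unfolding norm3_involution_def by (simp add: abs_mult)

lemma odd_pair_mod4_cases:
  assumes "odd (x::int)" "odd y"
  obtains t where "x = y + 4*t" "4 dvd (x - y)" | t where "x = y + 4*t + 2" "\<not> 4 dvd (x - y)"
proof -
  obtain a b where ab: "x = 2*a + 1" "y = 2*b + 1" using assms by (metis oddE)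
  show ?thesis
  proof (cases "even (a - b)")
    case True
    then obtain t where "a - b = 2*t" by (metis evenE)
    then have "x = y + 4*t" using ab by simp
    then show ?thesis using that(1) by simp
  next
    case False
    then obtain t where "a - b = 2*t + 1" by (metis oddE)
    then have "x = y + 4*t + 2" using ab by simp
    moreover have "\<not> 4 dvd (4*t + 2 :: int)" by presburger
    ultimately show ?thesis using that(2) by simp
  qed
qed

lemma norm3_involution_involutive:
  assumes "odd x" "odd y" "0 < x" "0 < y"
  shows "norm3_involution (norm3_involution (x, y)) = (x, y)"
proof -
  obtain s where s: "y = 2*s + 1" using assms(2) by (metis oddE)
  from odd_pair_mod4_cases[OF assms(1,2)] show ?thesis
  proof cases
    case (1 t)
    have e: "norm3_involution (x, y) = (\<bar>2*t - y\<bar>, 2*t + y)"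
      by (rule norm3_involution_cong) (use 1 in simp_all)
    show ?thesis
    proof (cases "2*t - y \<ge> 0")
      case True
      have "\<not> 4 dvd ((2*t - y) - (2*t + y))" using s by presburger
      then have "norm3_involution (2*t - y, 2*t + y) = (4*t + y, \<bar>- y\<bar>)"
        by (rule norm3_involution_not_cong) simp_all
      then show ?thesis using e True 1 assms by simp
    next
      case False
      have "norm3_involution (y - 2*t, 2*t + y) = (\<bar>-4*t - y\<bar>, y)"
        by (rule norm3_involution_cong) simp_all
      then show ?thesis using e False 1 assms by simp
    qed
  next
    case (2 t)
    have e: "norm3_involution (x, y) = (2*y + 2*t + 1, \<bar>2*t + 1\<bar>)"
      by (rule norm3_involution_not_cong) (use 2 in simp_all)
    show ?thesis
    proof (cases "2*t + 1 \<ge> 0")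
      case True
      have "\<not> 4 dvd ((2*y + 2*t + 1) - (2*t + 1))" using s by presburger
      then have "norm3_involution (2*y + 2*t + 1, 2*t + 1) = (y + 4*t + 2, \<bar>y\<bar>)"
        by (rule norm3_involution_not_cong) simp_all
      then show ?thesis using e True 2 assms by simp
    next
      case False
      have "4 dvd ((2*y + 2*t + 1) - (-2*t - 1))" using s by presburger
      then have "norm3_involution (2*y + 2*t + 1, -2*t - 1) = (\<bar>y + 4*t + 2\<bar>, y)"
        by (rule norm3_involution_cong) simp_all
      then show ?thesis using e False 2 assms by simp
    qed
  qed
qed

lemma norm3_half_plus: "2*u = x - 3*y \<Longrightarrow> 2*v = x + y \<Longrightarrow> u^2 + 3*v^2 = x^2 + 3*(y::int)^2"
proof -
  assume a: "2*u = x - 3*y" and b: "2*v = x + y"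
  have "4*(u^2 + 3*v^2) = (2*u)^2 + 3*(2*v)^2" by (simp add: power2_eq_square)
  also have "\<dots> = 4*(x^2 + 3*y^2)" unfolding a b by (simp add: power2_eq_square algebra_simps)
  finally show ?thesis by simp
qed

lemma norm3_half_minus: "2*u = x + 3*y \<Longrightarrow> 2*v = x - y \<Longrightarrow> u^2 + 3*v^2 = x^2 + 3*(y::int)^2"
proof -
  assume a: "2*u = x + 3*y" and b: "2*v = x - y"
  have "4*(u^2 + 3*v^2) = (2*u)^2 + 3*(2*v)^2" by (simp add: power2_eq_square)
  also have "\<dots> = 4*(x^2 + 3*y^2)" unfolding a b by (simp add: power2_eq_square algebra_simps)
  finally show ?thesis by simp
qed

lemma norm3_involution_props:
  assumes "odd x" "odd y" "0 < x" "0 < y" "norm3_involution (x, y) = (x', y')"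
  shows "odd x' \<and> odd y' \<and> 0 < x' \<and> 0 < y' \<and> x'^2 + 3*y'^2 = x^2 + 3*y^2
         \<and> ((x', y') = (x, y) \<longleftrightarrow> x = y \<or> x = 3*y)"
proof -
  obtain s where s: "y = 2*s + 1" using assms(2) by (metis oddE)
  from odd_pair_mod4_cases[OF assms(1,2)] show ?thesis
  proof cases
    case (1 t)
    have "norm3_involution (x, y) = (\<bar>2*t - y\<bar>, 2*t + y)"
      by (rule norm3_involution_cong) (use 1 in simp_all)
    then have x': "x' = \<bar>2*t - y\<bar>" and y': "y' = 2*t + y" using assms(5) by simp_all
    have "(2*t - y)^2 + 3*(2*t + y)^2 = x^2 + 3*y^2"
      by (rule norm3_half_plus) (use 1 in simp_all)
    moreover have "odd x'" "odd y'" "0 < x'" "0 < y'"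
      unfolding x' y' using s 1 assms(3,4) by presburger+
    moreover have "(x', y') = (x, y) \<longleftrightarrow> x = y \<or> x = 3*y"
      unfolding x' y' using 1 s assms(3,4) by (auto simp: abs_if)
    ultimately show ?thesis unfolding x' y' by simp
  next
    case (2 t)
    have "norm3_involution (x, y) = (2*y + 2*t + 1, \<bar>2*t + 1\<bar>)"
      by (rule norm3_involution_not_cong) (use 2 in simp_all)
    then have x': "x' = 2*y + 2*t + 1" and y': "y' = \<bar>2*t + 1\<bar>" using assms(5) by simp_all
    have "(2*y + 2*t + 1)^2 + 3*(2*t + 1)^2 = x^2 + 3*y^2"
      by (rule norm3_half_minus) (use 2 in simp_all)
    moreover have "odd x'" "odd y'" "0 < x'" "0 < y'"
      unfolding x' y' using s 2 assms(3,4) by presburger+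
    moreover have "(x', y') = (x, y) \<longleftrightarrow> x = y \<or> x = 3*y"
      unfolding x' y' using 2 s assms(3,4) by (auto simp: abs_if)
    ultimately show ?thesis unfolding x' y' by simp
  qed
qed

lemma odd_square_triangle: "(2 * int j + 1)^2 = 8 * int (triangle j) + 1"
proof -
  have "2 * int (triangle j) = int j * (int j + 1)"
    using arg_cong[OF two_triangle[of j], of int] by (simp add: algebra_simps)
  then show ?thesis by (simp add: power2_eq_square algebra_simps)
qed

definition tri_reps :: "nat \<Rightarrow> (nat \<times> nat) set" where
  "tri_reps m = {(j, k). triangle j + 3 * triangle k = m}"

definition odd_coords :: "nat \<times> nat \<Rightarrow> int \<times> int" where
  "odd_coords p = (2 * int (fst p) + 1, 2 * int (snd p) + 1)"

lemma inj_odd_coords: "inj odd_coords"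
  unfolding odd_coords_def inj_on_def by auto

lemma finite_tri_reps: "finite (tri_reps m)"
proof (rule finite_subset)
  have "j \<le> triangle j + 3 * triangle k \<and> k \<le> triangle j + 3 * triangle k" for j k
    using le_triangle[of j] le_triangle[of k] by linarith
  then show "tri_reps m \<subseteq> {0..m} \<times> {0..m}" by (auto simp: tri_reps_def)
qed simp

lemma odd_coords_tri_reps_iff:
  "(x, y) \<in> odd_coords ` tri_reps m
     \<longleftrightarrow> odd x \<and> odd y \<and> 0 < x \<and> 0 < y \<and> x^2 + 3*y^2 = 8 * int m + 4"
proof
  assume "(x, y) \<in> odd_coords ` tri_reps m"
  then obtain j k where jk: "triangle j + 3 * triangle k = m" "x = 2 * int j + 1" "y = 2 * int k + 1"
    unfolding tri_reps_def odd_coords_def by auto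
  have "x^2 + 3*y^2 = 8 * int (triangle j + 3 * triangle k) + 4"
    unfolding jk(2,3) odd_square_triangle by simp
  then show "odd x \<and> odd y \<and> 0 < x \<and> 0 < y \<and> x^2 + 3*y^2 = 8 * int m + 4"
    using jk by simp
next
  assume a: "odd x \<and> odd y \<and> 0 < x \<and> 0 < y \<and> x^2 + 3*y^2 = 8 * int m + 4"
  then obtain a b where ab: "x = 2*a + 1" "y = 2*b + 1" by (metis oddE)
  then have "0 \<le> a" "0 \<le> b" using a by auto
  then have xj: "x = 2 * int (nat a) + 1" and yk: "y = 2 * int (nat b) + 1" using ab by simp_all
  have "8 * int (triangle (nat a) + 3 * triangle (nat b)) + 4 = 8 * int m + 4"
    using a unfolding xj yk odd_square_triangle by simp
  then have "(nat a, nat b) \<in> tri_reps m" by (simp add: tri_reps_def)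
  then show "(x, y) \<in> odd_coords ` tri_reps m"
    unfolding odd_coords_def using xj yk by (auto intro!: image_eqI[of _ _ "(nat a, nat b)"])
qed

lemma card_tri_reps_parity:
  "(of_nat (card (tri_reps m)) :: bit)
     = of_nat (card {p \<in> odd_coords ` tri_reps m. norm3_involution p = p})"
proof -
  have "(of_nat (card (tri_reps m)) :: bit) = (\<Sum>p\<in>odd_coords ` tri_reps m. 1)"
    using inj_odd_coords by (simp add: card_image inj_on_subset)
  also have "\<dots> = (\<Sum>p\<in>{p \<in> odd_coords ` tri_reps m. norm3_involution p = p}. 1)"
  proof (rule sum_bit_eq_sum_fixed_points)
    show "finite (odd_coords ` tri_reps m)" using finite_tri_reps by simp
  next
    fix p assume p: "p \<in> odd_coords ` tri_reps m"
    obtain x y where xy: "p = (x, y)" by fastforce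
    obtain x' y' where s: "norm3_involution (x, y) = (x', y')" by fastforce
    have P: "odd x \<and> odd y \<and> 0 < x \<and> 0 < y \<and> x^2 + 3*y^2 = 8 * int m + 4"
      using p unfolding xy odd_coords_tri_reps_iff .
    then show "norm3_involution p \<in> odd_coords ` tri_reps m"
      unfolding xy s odd_coords_tri_reps_iff using norm3_involution_props[OF _ _ _ _ s] by auto
    show "norm3_involution (norm3_involution p) = p"
      unfolding xy using norm3_involution_involutive P by simp
  qed simp
  finally show ?thesis by simp
qed

lemma triangle_3k_plus_1: "triangle (Suc (3*k)) = 9 * triangle k + 1"
proof -
  have "2 * triangle (Suc (3*k)) = 2 * (9 * triangle k + 1)"
    using two_triangle[of "Suc (3*k)"] two_triangle[of k] by (simp add: algebra_simps del: triangle.simps)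
  then show ?thesis by simp
qed

lemma norm3_involution_fixed_iff:
  "norm3_involution (odd_coords q) = odd_coords q \<longleftrightarrow> fst q = snd q \<or> fst q = 3 * snd q + 1"
proof -
  obtain x' y' where s: "norm3_involution (odd_coords q) = (x', y')" by fastforce
  have "(x', y') = odd_coords q \<longleftrightarrow>
      2 * int (fst q) + 1 = 2 * int (snd q) + 1 \<or> 2 * int (fst q) + 1 = 3 * (2 * int (snd q) + 1)"
    using norm3_involution_props[of _ _ x' y'] s unfolding odd_coords_def by simp
  also have "\<dots> \<longleftrightarrow> fst q = snd q \<or> fst q = 3 * snd q + 1" by presburger
  finally show ?thesis using s by simp
qed

lemma card_Collect_at_most_one:
  assumes "\<And>a b. P a \<Longrightarrow> P b \<Longrightarrow> a = b"
  shows "card {x. P x} = (if \<exists>x. P x then 1 else 0)"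
proof (cases "\<exists>x. P x")
  case True
  then obtain a where "P a" by blast
  then have "{x. P x} = {a}" using assms by blast
  then show ?thesis using True by simp
qed simp

lemma card_fixed_tri_reps:
  "card {p \<in> odd_coords ` tri_reps m. norm3_involution p = p}
     = (if \<exists>j. 4 * triangle j = m then 1 else 0) + (if \<exists>k. 12 * triangle k + 1 = m then 1 else 0)"
proof -
  define A where "A = {j. 4 * triangle j = m}"
  define B where "B = {k. 12 * triangle k + 1 = m}"
  have fin: "finite A" "finite B"
  proof -
    have "j \<le> 4 * triangle j" "j \<le> 12 * triangle j + 1" for j
      using le_triangle[of j] by linarith+
    then have "A \<subseteq> {..m}" "B \<subseteq> {..m}" unfolding A_def B_def by auto
    then show "finite A" "finite B" by (auto intro: finite_subset)
  qed
  have "{q \<in> tri_reps m. norm3_involution (odd_coords q) = odd_coords q}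
      = (\<lambda>j. (j, j)) ` A \<union> (\<lambda>k. (3*k+1, k)) ` B"
    unfolding norm3_involution_fixed_iff tri_reps_def A_def B_def
    by (auto simp: triangle_3k_plus_1 simp del: triangle.simps)
  then have "{p \<in> odd_coords ` tri_reps m. norm3_involution p = p}
      = odd_coords ` ((\<lambda>j. (j, j)) ` A \<union> (\<lambda>k. (3*k+1, k)) ` B)"
    by blast
  also have "card \<dots> = card ((\<lambda>j. (j, j)) ` A \<union> (\<lambda>k. (3*k+1, k)) ` B)"
    using inj_odd_coords by (simp add: card_image inj_on_subset)
  also have "\<dots> = card ((\<lambda>j. (j, j)) ` A) + card ((\<lambda>k. (3*k+1, k)) ` B)"
    using fin by (intro card_Un_disjoint) auto
  also have "\<dots> = card A + card B"
    by (simp add: card_image inj_on_def)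
  also have "card A = (if \<exists>j. 4 * triangle j = m then 1 else 0)"
    unfolding A_def by (rule card_Collect_at_most_one) (auto intro: triangle_inj)
  also have "card B = (if \<exists>k. 12 * triangle k + 1 = m then 1 else 0)"
    unfolding B_def by (rule card_Collect_at_most_one) (auto intro: triangle_inj)
  finally show ?thesis .
qed

lemma bij_betw_tri_reps_fst:
  "bij_betw (\<lambda>q. triangle (fst q)) (tri_reps m)
     {i \<in> {0..m}. (\<exists>j. triangle j = i) \<and> 3 dvd (m - i) \<and> (\<exists>k. triangle k = (m - i) div 3)}"
    (is "bij_betw _ _ ?I")
proof (rule bij_betwI')
  fix q q' assume q: "q \<in> tri_reps m" and q': "q' \<in> tri_reps m"
  show "triangle (fst q) = triangle (fst q') \<longleftrightarrow> q = q'"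
  proof
    assume e: "triangle (fst q) = triangle (fst q')"
    then have "fst q = fst q'" by (rule triangle_inj)
    moreover have "triangle (snd q) = triangle (snd q')" using q q' e unfolding tri_reps_def by auto
    then have "snd q = snd q'" by (rule triangle_inj)
    ultimately show "q = q'" by (simp add: prod_eq_iff)
  qed simp
next
  fix q assume "q \<in> tri_reps m"
  then obtain j k where q: "q = (j, k)" "triangle j + 3 * triangle k = m"
    unfolding tri_reps_def by auto
  then have "m - triangle j = 3 * triangle k" by simp
  then show "triangle (fst q) \<in> ?I" using q by auto
next
  fix i assume "i \<in> ?I"
  then obtain j k where jk: "triangle j = i" "i \<le> m" "3 dvd (m - i)" "triangle k = (m - i) div 3"
    by auto
  then have "triangle j + 3 * triangle k = m" by auto
  then show "\<exists>q\<in>tri_reps m. i = triangle (fst q)"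
    using jk by (intro bexI[of _ "(j, k)"]) (simp_all add: tri_reps_def)
qed

lemma psi_bit_mult_dilate3_nth: "(psi_bit * fps_dilate 3 psi_bit) $ m = of_nat (card (tri_reps m))"
proof -
  define I where
    "I = {i \<in> {0..m}. (\<exists>j. triangle j = i) \<and> 3 dvd (m - i) \<and> (\<exists>k. triangle k = (m - i) div 3)}"
  have "(psi_bit * fps_dilate 3 psi_bit) $ m = (\<Sum>i=0..m. psi_bit $ i * fps_dilate 3 psi_bit $ (m - i))"
    by (simp add: fps_mult_nth)
  also have "\<dots> = (\<Sum>i=0..m. if i \<in> I then 1 else 0)"
    by (rule sum.cong[OF refl]) (auto simp: I_def psi_bit_def fps_dilate_nth)
  also have "\<dots> = (\<Sum>i\<in>{i\<in>{0..m}. i \<in> I}. 1)"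
    by (rule sum.inter_filter[symmetric]) simp
  also have "{i\<in>{0..m}. i \<in> I} = I" by (auto simp: I_def)
  also have "(\<Sum>i\<in>I. 1) = (of_nat (card I) :: bit)" by simp
  also have "card I = card (tri_reps m)"
    unfolding I_def by (rule bij_betw_same_card[symmetric, OF bij_betw_tri_reps_fst])
  finally show ?thesis .
qed

lemma psi_bit_dissection_nth:
  "(fps_dilate 4 psi_bit + fps_X * fps_dilate 12 psi_bit) $ m
     = (if \<exists>j. 4 * triangle j = m then 1 else 0) + (if \<exists>k. 12 * triangle k + 1 = m then 1 else 0)"
proof -
  have "fps_dilate 4 psi_bit $ m = (if \<exists>j. 4 * triangle j = m then 1 else 0)"
    by (auto simp: fps_dilate_nth psi_bit_def simp del: triangle.simps)
      (metis dvd_mult_div_cancel)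
  moreover have "(fps_X * fps_dilate 12 psi_bit) $ m = (if \<exists>k. 12 * triangle k + 1 = m then 1 else 0)"
    by (cases m) (auto simp: fps_X_mult_nth fps_dilate_nth psi_bit_def simp del: triangle.simps,
        metis dvd_mult_div_cancel)
  ultimately show ?thesis by simp
qed

lemma psi_bit_identity:
  "psi_bit * fps_dilate 3 psi_bit = fps_dilate 4 psi_bit + fps_X * fps_dilate 12 psi_bit"
proof (rule fps_ext)
  fix m
  show "(psi_bit * fps_dilate 3 psi_bit) $ m = (fps_dilate 4 psi_bit + fps_X * fps_dilate 12 psi_bit) $ m"
    unfolding psi_bit_mult_dilate3_nth card_tri_reps_parity card_fixed_tri_reps
      psi_bit_dissection_nth by simp
qed

section \<open>Jacobi's identity modulo 2 and the 2-dissection\<close>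

lemma psi_bit_mult_euler_bit: "psi_bit * euler_bit = fps_dilate 4 euler_bit"
proof (rule fps_ext)
  fix n
  have "(psi_bit * fps_dilate 3 psi_bit) $ (3*n)
      = (\<Sum>i=0..3*n. if 3 dvd i then psi_bit $ i * psi_bit $ ((3*n - i) div 3) else 0)"
    unfolding fps_mult_nth
  proof (rule sum.cong[OF refl])
    fix i assume "i \<in> {0..3*n}"
    then have "3 dvd (3*n - i) \<longleftrightarrow> 3 dvd i" by (simp add: dvd_diff_nat) presburger
    then show "psi_bit $ i * fps_dilate 3 psi_bit $ (3*n - i)
        = (if 3 dvd i then psi_bit $ i * psi_bit $ ((3*n - i) div 3) else 0)"
      by (simp add: fps_dilate_nth)
  qed
  also have "\<dots> = (\<Sum>i=0..n. psi_bit $ (3*i) * psi_bit $ ((3*n - 3*i) div 3))"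
    by (rule sum_multiples_reindex) simp
  also have "\<dots> = (euler_bit * psi_bit) $ n"
    by (simp add: euler_bit_nth right_diff_distrib'[symmetric] fps_mult_nth)
  finally have lhs: "(psi_bit * fps_dilate 3 psi_bit) $ (3*n) = (psi_bit * euler_bit) $ n"
    by (simp add: mult.commute)
  have "fps_dilate 4 psi_bit $ (3*n) = fps_dilate 4 euler_bit $ n"
  proof (cases "4 dvd n")
    case True
    then show ?thesis by (auto simp: fps_dilate_nth euler_bit_nth)
  next
    case False
    then have "\<not> 4 dvd (3*n)" by presburger
    then show ?thesis using False by (simp add: fps_dilate_nth)
  qed
  moreover have "(fps_X * fps_dilate 12 psi_bit) $ (3*n) = 0"
  proof (cases n)
    case (Suc n')
    then have "\<not> 12 dvd (3*n - 1)" by presburger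
    then show ?thesis using Suc by (simp add: fps_X_mult_nth fps_dilate_nth)
  qed simp
  ultimately show "(psi_bit * euler_bit) $ n = fps_dilate 4 euler_bit $ n"
    using lhs psi_bit_identity by (metis add_0_right fps_add_nth)
qed

lemma euler_bit_power_4: "euler_bit ^ 4 = fps_dilate 4 euler_bit"
proof -
  have "euler_bit ^ 4 = (euler_bit ^ 2) ^ 2" by (simp flip: power_mult)
  also have "\<dots> = fps_dilate 4 euler_bit" by (simp add: fps_bit_square fps_dilate_dilate)
  finally show ?thesis .
qed

lemma psi_bit_eq_euler_bit_cube: "psi_bit = euler_bit ^ 3"
proof -
  have "euler_bit * psi_bit = euler_bit * euler_bit ^ 3"
    using psi_bit_mult_euler_bit euler_bit_power_4
    by (simp add: mult.commute power_Suc[symmetric] del: power_Suc)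
  moreover have "euler_bit \<noteq> 0" using euler_bit_0 by auto
  ultimately show ?thesis by simp
qed

lemma two_dissection_mult_dilate:
  fixes A B U :: "'a::comm_ring_1 fps"
  shows "(fps_dilate 2 A + fps_X * fps_dilate 2 B) * fps_dilate 2 U
    = fps_dilate 2 (A * U) + fps_X * fps_dilate 2 (B * U)"
  by (simp add: fps_dilate_mult algebra_simps)

lemma inverse_bit_two_dissection:
  fixes c d :: "bit fps"
  assumes c0: "c $ 0 = 1" and d0: "d $ 0 = 1"
    and dissect: "c * d = fps_dilate 4 c + fps_X * fps_dilate 4 d"
  shows "inverse (c * d) $ (2*n) = (c * inverse d) $ n"
    and "inverse (c * d) $ (4*n+1) = c $ n"
proof -
  define W where "W = c * d"
  have W_dissect: "W = fps_dilate 2 (c ^ 2) + fps_X * fps_dilate 2 (d ^ 2)"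
    unfolding W_def dissect by (simp add: fps_bit_square fps_dilate_dilate)
  have cc: "c * inverse c = 1" and dd: "d * inverse d = 1"
    using c0 d0 by (simp_all add: inverse_mult_eq_1')
  have invW: "inverse W = inverse c * inverse d"
    unfolding W_def by (rule fps_inverse_mult)
  have "W * inverse W = 1" using c0 d0 by (simp add: W_def inverse_mult_eq_1')
  then have "inverse W = W * inverse W ^ 2"
    by (metis mult.assoc mult_1 power2_eq_square)
  then have inverse_W: "inverse W = W * fps_dilate 2 (inverse W)"
    by (simp add: fps_bit_square)
  have "inverse W $ (2*n) = (c ^ 2 * inverse W) $ n"
    by (subst inverse_W, subst W_dissect) (simp only: two_dissection_mult_dilate two_dissection_nth_even)
  also have "c ^ 2 * inverse W = c * inverse d"
    using cc by (simp add: invW power2_eq_square algebra_simps)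
  finally show "inverse (c * d) $ (2*n) = (c * inverse d) $ n" by (simp add: W_def)
  have "inverse W $ (2*(2*n)+1) = (d ^ 2 * inverse W) $ (2*n)"
    by (subst inverse_W, subst W_dissect) (simp only: two_dissection_mult_dilate two_dissection_nth_odd)
  also have "d ^ 2 * inverse W = d ^ 2 * inverse W * (c * inverse c)"
    using cc by simp
  also have "\<dots> = (d * inverse d) * (W * inverse c ^ 2)"
    unfolding invW unfolding W_def power2_eq_square by (simp only: ac_simps)
  also have "\<dots> = W * fps_dilate 2 (inverse c)"
    using dd by (simp add: fps_bit_square)
  also have "(W * fps_dilate 2 (inverse c)) $ (2*n) = (c ^ 2 * inverse c) $ n"
    by (subst W_dissect) (simp only: two_dissection_mult_dilate two_dissection_nth_even)
  also have "c ^ 2 * inverse c = c"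
    using cc by (simp add: power2_eq_square algebra_simps)
  finally show "inverse (c * d) $ (4*n+1) = c $ n" by (simp add: W_def mult.assoc)
qed

lemma fps_mod2_Fstar6_series:
  "fps_mod2 Fstar6_series = fps_dilate 2 (inverse (psi_bit * fps_dilate 3 psi_bit))"
proof -
  define a where "a = euler_bit"
  define b where "b = fps_dilate 3 euler_bit"
  have q1: "fps_mod2 (qpoch 1) = a" by (simp only: a_def fps_mod2_qpoch_1)
  have q3: "fps_mod2 (qpoch 3) = b" and q2: "fps_mod2 (qpoch 2) = a ^ 2"
    and q6: "fps_mod2 (qpoch 6) = b ^ 2"
    by (simp_all add: a_def b_def fps_mod2_qpoch fps_bit_square fps_dilate_dilate)
  have "(qpoch 2 * qpoch 6) $ 0 = 1" by (simp add: qpoch_def)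
  then have "fps_mod2 Fstar6_series = (a * b * inverse ((a * b) ^ 2)) ^ 6"
    unfolding Fstar6_series_def
    by (simp only: fps_mod2_power fps_mod2_mult fps_mod2_finv q1 q2 q3 q6 power_mult_distrib)
  also have "a * b * inverse ((a * b) ^ 2) = inverse (a * b)"
  proof -
    have "(a * b) $ 0 = 1" by (simp add: a_def b_def euler_bit_0)
    then have "a * b * inverse (a * b) = 1" by (simp add: inverse_mult_eq_1')
    moreover have "a * b * inverse ((a * b) ^ 2) = (a * b * inverse (a * b)) * inverse (a * b)"
      unfolding fps_inverse_power by (simp only: power2_eq_square mult.assoc)
    ultimately show ?thesis by simp
  qed
  also have "inverse (a * b) ^ 6 = (inverse ((a * b) ^ 3)) ^ 2"
    by (simp add: fps_inverse_power flip: power_mult)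
  also have "\<dots> = fps_dilate 2 (inverse ((a * b) ^ 3))"
    by (rule fps_bit_square)
  also have "(a * b) ^ 3 = psi_bit * fps_dilate 3 psi_bit"
    by (simp add: a_def b_def psi_bit_eq_euler_bit_cube fps_dilate_power power_mult_distrib)
  finally show ?thesis .
qed

lemma fps_mod2_Fstar6_series_nth:
  shows "fps_mod2 Fstar6_series $ (4*n) = (psi_bit * inverse (fps_dilate 3 psi_bit)) $ n"
    and "fps_mod2 Fstar6_series $ (8*n+2) = psi_bit $ n"
proof -
  have c0: "psi_bit $ 0 = 1" and d0: "fps_dilate 3 psi_bit $ 0 = 1"
    by (simp_all add: psi_bit_0)
  have dissect: "psi_bit * fps_dilate 3 psi_bit
      = fps_dilate 4 psi_bit + fps_X * fps_dilate 4 (fps_dilate 3 psi_bit)"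
    by (simp add: psi_bit_identity fps_dilate_dilate)
  note parts = inverse_bit_two_dissection[OF c0 d0 dissect]
  have "4*n = 2*(2*n)" by simp
  then show "fps_mod2 Fstar6_series $ (4*n) = (psi_bit * inverse (fps_dilate 3 psi_bit)) $ n"
    unfolding fps_mod2_Fstar6_series by (simp only: fps_dilate_nth_mult zero_less_numeral parts)
  have "8*n+2 = 2*(4*n+1)" by simp
  then show "fps_mod2 Fstar6_series $ (8*n+2) = psi_bit $ n"
    unfolding fps_mod2_Fstar6_series by (simp only: fps_dilate_nth_mult zero_less_numeral parts)
qed

lemma cong_2_iff_fps_mod2: "[f $ m = g $ n] (mod 2) \<longleftrightarrow> fps_mod2 f $ m = fps_mod2 g $ n"
  by (simp add: cong_2_iff_bit)

theorem lemma3p8: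
  shows "(\<forall>n. [Fstar6 (4 * n) = fps_nth (qpoch 1 ^ 3 * finv (qpoch 3 ^ 3)) n] (mod 2))
       \<and> (\<forall>n. [Fstar6 (8 * n + 2) = fps_nth (qpoch 1 ^ 3) n] (mod 2))"
proof -
  have "(qpoch 3 ^ 3) $ 0 = 1" by (simp add: qpoch_def fps_power_zeroth)
  then have quotient: "fps_mod2 (qpoch 1 ^ 3 * finv (qpoch 3 ^ 3))
      = psi_bit * inverse (fps_dilate 3 psi_bit)"
    by (simp only: fps_mod2_mult fps_mod2_power fps_mod2_finv fps_mod2_qpoch_1
        fps_mod2_qpoch[of 3] psi_bit_eq_euler_bit_cube fps_dilate_power zero_less_numeral)
  have cube: "fps_mod2 (qpoch 1 ^ 3) = psi_bit"
    by (simp only: fps_mod2_power fps_mod2_qpoch_1 psi_bit_eq_euler_bit_cube)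
  show ?thesis
    unfolding Fstar6_def cong_2_iff_fps_mod2 quotient cube fps_mod2_Fstar6_series_nth by simp
qed

end
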